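(* Consider the graded cluster algebra $\mathcal{A}\big((x_1,x_2,x_3),B,(1,1,2)\big)$ with $B=\begin{pmatrix}0&2&-1\\-2&0&1\\1&-1&0\end{pmatrix}$. The only degrees of cluster variables that occur are $1,-1,2,-2$.
   Context: Graded cluster algebras: for a $3\times3$ skew-symmetric integer matrix $B=(b_{ij})$ and $k\in\{1,2,3\}$, $\mu_k(B)=(b'_{ij})$ with $b'_{ij}=-b_{ij}$ if $i=k$ or $j=k$ and $b'_{ij}=b_{ij}+\operatorname{sgn}(b_{ik})\max(b_{ik}b_{kj},0)$ otherwise. A seed $((x_1,x_2,x_3),B)$ mutates in direction $k$ to $(x',\mu_k B)$ with $x'_j=x_j$ ($j\ne k$) and $x'_k=\big(\prod_{b_{ik}>0}x_i^{b_{ik}}+\prod_{b_{ik}<0}x_i^{-b_{ik}}\big)/x_k$. Cluster variables are all entries of clusters reachable by iterated mutation; $\mathcal{A}(x,B,g)$ is the algebra they generate, graded by $\deg x_i=g_i$ where $Bg=0$; under mutation at $k$ the degree vector becomes $g'$ with $g'_j=g_j$ ($j\neq k$), $g'_k=-g_k+\sum_{b_{ik}>0}b_{ik}g_i$, and every cluster variable is homogeneous of the degree recorded in any seed containing it. *)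

theory Defs
  imports Complex_Main
begin

(* Indices 1,2,3 of the paper are represented by 0,1,2.
   Exchange matrices: nat => nat => int (only entries with indices < 3 matter).
   Cluster variables: rational functions in x1,x2,x3, represented by their
   evaluation maps (nat => real) => real. *)

type_synonym mat3 = "nat \<Rightarrow> nat \<Rightarrow> int"
type_synonym ratfun = "(nat \<Rightarrow> real) \<Rightarrow> real"

definition mutB :: "nat \<Rightarrow> mat3 \<Rightarrow> mat3" where
  "mutB k B = (\<lambda>i j. if i = k \<or> j = k then - B i j
                     else B i j + sgn (B i k) * max (B i k * B k j) 0)"

definition mutx :: "nat \<Rightarrow> mat3 \<Rightarrow> (nat \<Rightarrow> ratfun) \<Rightarrow> (nat \<Rightarrow> ratfun)" where
  "mutx k B x = (\<lambda>j. if j = k then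
      (\<lambda>v. ((\<Prod>i\<in>{i. i < 3 \<and> B i k > 0}. x i v ^ nat (B i k))
           + (\<Prod>i\<in>{i. i < 3 \<and> B i k < 0}. x i v ^ nat (- B i k))) / x k v)
    else x j)"

definition mutg :: "nat \<Rightarrow> mat3 \<Rightarrow> (nat \<Rightarrow> int) \<Rightarrow> (nat \<Rightarrow> int)" where
  "mutg k B g = (\<lambda>j. if j = k then - g k + (\<Sum>i\<in>{i. i < 3 \<and> B i k > 0}. B i k * g i)
                      else g j)"

inductive reachable :: "(nat \<Rightarrow> ratfun) \<Rightarrow> mat3 \<Rightarrow> (nat \<Rightarrow> int)
      \<Rightarrow> (nat \<Rightarrow> ratfun) \<Rightarrow> mat3 \<Rightarrow> (nat \<Rightarrow> int) \<Rightarrow> bool"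
  for x0 B0 g0 where
  init: "reachable x0 B0 g0 x0 B0 g0"
| step: "reachable x0 B0 g0 x B g \<Longrightarrow> k < 3 \<Longrightarrow>
         reachable x0 B0 g0 (mutx k B x) (mutB k B) (mutg k B g)"

definition Bex :: mat3 where
  "Bex = (\<lambda>i j. if i = 0 \<and> j = 1 then 2 else if i = 1 \<and> j = 0 then -2
             else if i = 0 \<and> j = 2 then -1 else if i = 2 \<and> j = 0 then 1
             else if i = 1 \<and> j = 2 then 1 else if i = 2 \<and> j = 1 then -1 else 0)"

definition gex :: "nat \<Rightarrow> int" where
  "gex = (\<lambda>i. if i = 0 then 1 else if i = 1 then 1 else if i = 2 then 2 else 0)"

definition xinit :: "nat \<Rightarrow> ratfun" where
  "xinit = (\<lambda>i v. v i)"

definition cluster_degrees :: "(nat \<Rightarrow> ratfun) \<Rightarrow> mat3 \<Rightarrow> (nat \<Rightarrow> int) \<Rightarrow> int set" where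
  "cluster_degrees x0 B0 g0 =
     {d. \<exists>z x B g k. reachable x0 B0 g0 x B g \<and> k < 3 \<and> x k = z \<and> g k = d}"

end

theory Submission
  imports Defs
begin

text \<open>The degree vector of a seed, and its mutation, depend only on the exchange matrix and the
  previous degree vector, never on the cluster. So it suffices to follow the pairs \<open>(B, g)\<close>:
  starting from \<open>(Bex, gex)\<close>, they form a closed orbit of 24 pairs under the three mutations,
  found by exhaustive computation, and the degrees occurring in it are exactly \<open>\<plusminus>1, \<plusminus>2\<close>.
  The degrees \<open>-1, -2\<close> do occur: mutating in directions \<open>3, 1, 3, 2, 3\<close> returns to \<open>Bex\<close>
  with the grading negated.\<close>

lemma less_3_iff: "(k::nat) < 3 \<longleftrightarrow> k = 0 \<or> k = 1 \<or> k = 2"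
  by auto

lemma sum_less_3_filter:
  "(\<Sum>i\<in>{i. i < (3::nat) \<and> P i}. f i) =
     (if P 0 then f 0 else 0) + (if P 1 then f 1 else 0) + (if P 2 then f 2 else (0::'a::comm_monoid_add))"
proof -
  have "(\<Sum>i\<in>{i. i < (3::nat) \<and> P i}. f i) = (\<Sum>i<3. if P i then f i else 0)"
    by (subst sum.inter_filter[symmetric]) (simp_all add: conj_commute)
  then show ?thesis
    by (simp add: numeral_3_eq_3 numeral_2_eq_2 add.assoc)
qed

definition seed_code :: "mat3 \<Rightarrow> (nat \<Rightarrow> int) \<Rightarrow> int list" where
  "seed_code B g = [B 0 0, B 0 1, B 0 2, B 1 0, B 1 1, B 1 2, B 2 0, B 2 1, B 2 2, g 0, g 1, g 2]"

lemma seed_code_degree: "k < 3 \<Longrightarrow> g k = seed_code B g ! (9 + k)"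
  by (auto simp: seed_code_def less_3_iff)

definition mut_code :: "nat \<Rightarrow> int list \<Rightarrow> int list" where
  "mut_code k t = (let b = (\<lambda>i j. t ! (3 * i + j)); g = (\<lambda>i. t ! (9 + i)) in
     seed_code
       (\<lambda>i j. if i = k \<or> j = k then - b i j else b i j + sgn (b i k) * max (b i k * b k j) 0)
       (\<lambda>j. if j = k then - g k + ((if b 0 k > 0 then b 0 k * g 0 else 0)
              + (if b 1 k > 0 then b 1 k * g 1 else 0) + (if b 2 k > 0 then b 2 k * g 2 else 0))
            else g j))"

lemma seed_code_mut:
  assumes "k < 3"
  shows "seed_code (mutB k B) (mutg k B g) = mut_code k (seed_code B g)"
proof -
  have "k = 0 \<or> k = 1 \<or> k = 2"
    using assms by (simp only: less_3_iff)
  then show ?thesis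
    by (auto simp: seed_code_def mut_code_def mutB_def mutg_def sum_less_3_filter Let_def)
qed

definition mutation_orbit :: "int list list" where
  "mutation_orbit =
    [[0, 1, 1, -1, 0, -1, -1, 1, 0, -1, -1, 1],
     [0, 1, -1, -1, 0, -1, 1, 1, 0, 1, -1, -1],
     [0, -1, -1, 1, 0, -1, 1, 1, 0, 1, -1, 1],
     [0, -1, -1, 1, 0, 1, 1, -1, 0, 1, 1, -1],
     [0, 1, -2, -1, 0, 1, 2, -1, 0, 1, 2, 1],
     [0, -2, 1, 2, 0, -1, -1, 1, 0, -1, -1, -2],
     [0, -1, -1, 1, 0, -1, 1, 1, 0, -1, 1, -1],
     [0, -1, 2, 1, 0, -1, -2, 1, 0, 1, 2, 1],
     [0, 1, 1, -1, 0, 1, -1, -1, 0, 1, -1, 1],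
     [0, -1, 1, 1, 0, -2, -1, 2, 0, 2, 1, 1],
     [0, -1, 1, 1, 0, 1, -1, -1, 0, -1, 1, 1],
     [0, -1, -1, 1, 0, 1, 1, -1, 0, -1, -1, 1],
     [0, -2, 1, 2, 0, -1, -1, 1, 0, 1, 1, 2],
     [0, 1, -1, -1, 0, 2, 1, -2, 0, -2, -1, -1],
     [0, -1, 1, 1, 0, 1, -1, -1, 0, 1, -1, -1],
     [0, 1, 1, -1, 0, 1, -1, -1, 0, -1, 1, -1],
     [0, 2, -1, -2, 0, 1, 1, -1, 0, -1, -1, -2],
     [0, 1, -2, -1, 0, 1, 2, -1, 0, -1, -2, -1],
     [0, 2, -1, -2, 0, 1, 1, -1, 0, 1, 1, 2],
     [0, -1, 2, 1, 0, -1, -2, 1, 0, -1, -2, -1],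
     [0, 1, 1, -1, 0, -1, -1, 1, 0, 1, 1, -1],
     [0, 1, -1, -1, 0, 2, 1, -2, 0, 2, 1, 1],
     [0, -1, 1, 1, 0, -2, -1, 2, 0, -2, -1, -1],
     [0, 1, -1, -1, 0, -1, 1, 1, 0, -1, 1, 1]]"


lemma mutation_orbit_closed: "\<forall>t\<in>set mutation_orbit. \<forall>k<3. mut_code k t \<in> set mutation_orbit"
proof -
  have "list_all (\<lambda>t. list_all (\<lambda>k. mut_code k t \<in> set mutation_orbit) [0, 1, 2]) mutation_orbit"
    by code_simp
  then show ?thesis
    by (auto simp: list_all_iff less_3_iff)
qed

lemma mutation_orbit_degrees: "\<forall>t\<in>set mutation_orbit. \<forall>k<3. t ! (9 + k) \<in> {1, -1, 2, -2}"
proof -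
  have "list_all (\<lambda>t. list_all (\<lambda>k. t ! (9 + k) \<in> {1, -1, 2, -2}) [0, 1, 2]) mutation_orbit"
    by code_simp
  then show ?thesis
    by (auto simp: list_all_iff less_3_iff)
qed

lemma reachable_seed_code_in_orbit:
  "reachable x0 Bex gex x B g \<Longrightarrow> seed_code B g \<in> set mutation_orbit"
proof (induction rule: reachable.induct)
  case init
  show ?case by (simp add: seed_code_def mutation_orbit_def Bex_def gex_def)
next
  case (step x B g k)
  then show ?case
    using mutation_orbit_closed by (simp add: seed_code_mut)
qed

fun mutate_along :: "nat list \<Rightarrow> (nat \<Rightarrow> ratfun) \<times> mat3 \<times> (nat \<Rightarrow> int)
    \<Rightarrow> (nat \<Rightarrow> ratfun) \<times> mat3 \<times> (nat \<Rightarrow> int)" where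
  "mutate_along [] s = s"
| "mutate_along (k # ks) (x, B, g) = mutate_along ks (mutx k B x, mutB k B, mutg k B g)"

lemma reachable_mutate_along:
  assumes "reachable x0 B0 g0 x B g" and "\<forall>k\<in>set ks. k < 3"
    and "mutate_along ks (x, B, g) = (x', B', g')"
  shows "reachable x0 B0 g0 x' B' g'"
  using assms
  by (induction ks arbitrary: x B g) (auto intro: reachable.step)

lemma seed_code_mutate_along:
  assumes "\<forall>k\<in>set ks. k < 3" and "mutate_along ks (x, B, g) = (x', B', g')"
  shows "seed_code B' g' = fold mut_code ks (seed_code B g)"
  using assms
  by (induction ks arbitrary: x B g) (auto simp: seed_code_mut)

lemma degree_of_reachable_Bex:
  assumes "reachable x0 Bex gex x B g" and "k < 3"
  shows "g k \<in> {1, -1, 2, -2}"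
proof -
  have "seed_code B g ! (9 + k) \<in> {1, -1, 2, -2}"
    using reachable_seed_code_in_orbit[OF assms(1)] mutation_orbit_degrees assms(2) by blast
  then show ?thesis
    using seed_code_degree[OF assms(2)] by simp
qed

lemma mutate_along_negates_degrees:
  assumes "mutate_along [2, 0, 2, 1, 2] (x0, Bex, gex) = (x, B, g)" and "k < 3"
  shows "g k = - gex k"
proof -
  have "seed_code B g = fold mut_code [2, 0, 2, 1, 2] (seed_code Bex gex)"
    using seed_code_mutate_along[OF _ assms(1)] by simp
  also have "\<dots> = seed_code Bex (\<lambda>i. - gex i)"
    by code_simp
  finally show ?thesis
    using seed_code_degree[OF assms(2), of g B] seed_code_degree[OF assms(2), of "\<lambda>i. - gex i" Bex]
    by simp
qed

lemma cluster_degreesI: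
  "reachable x0 B0 g0 x B g \<Longrightarrow> k < 3 \<Longrightarrow> g k \<in> cluster_degrees x0 B0 g0"
  unfolding cluster_degrees_def by blast

theorem mainTheorem4:
  shows "cluster_degrees xinit Bex gex = {1, -1, 2, -2}"
proof
  show "cluster_degrees xinit Bex gex \<subseteq> {1, -1, 2, -2}"
    unfolding cluster_degrees_def using degree_of_reachable_Bex by blast
next
  obtain x B g where path: "mutate_along [2, 0, 2, 1, 2] (xinit, Bex, gex) = (x, B, g)"
    using prod_cases3 by metis
  have reach: "reachable xinit Bex gex x B g"
    using reachable_mutate_along[OF reachable.init _ path] by simp
  have "gex 0 = 1" "gex 2 = 2"
    by (simp_all add: gex_def)
  then have "g 0 = -1" "g 2 = -2"
    using mutate_along_negates_degrees[OF path] by simp_all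
  then show "{1, -1, 2, -2} \<subseteq> cluster_degrees xinit Bex gex"
    using \<open>gex 0 = 1\<close> \<open>gex 2 = 2\<close>
      cluster_degreesI[OF reachable.init[of xinit Bex gex], of 0]
      cluster_degreesI[OF reachable.init[of xinit Bex gex], of 2]
      cluster_degreesI[OF reach, of 0] cluster_degreesI[OF reach, of 2]
    by simp
qed

end
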